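(* Let $q$ be a prime power and $T\in\mathbb F_q[X,Y,Z]$ a reduced polynomial. Consider the properties: (a) $T(a,0,z)=T(0,b,z)=z$ for all $a,b,z\in\mathbb F_q$; (c) for all $a,b,c,d\in\mathbb F_q$ with $a\neq c$ there is a unique $x\in\mathbb F_q$ with $T(x,a,b)=T(x,c,d)$; (d) for all $a,b,c\in\mathbb F_q$ there is a unique $z\in\mathbb F_q$ with $T(a,b,z)=c$; (e) for all $a,b,c,d\in\mathbb F_q$ with $a\neq c$ there is a unique pair $(y,z)\in\mathbb F_q^2$ with $T(a,y,z)=b$ and $T(c,y,z)=d$. Then: (i) if $T$ satisfies (a) and (c), then $T(X,y,z)$ is a permutation polynomial in $X$ over $\mathbb F_q$ for every $(y,z)\in\mathbb F_q^*\times\mathbb F_q$; (ii) if $T$ satisfies (a) and (e), then $T(x,Y,z)$ is a permutation polynomial in $Y$ over $\mathbb F_q$ for every $(x,z)\in\mathbb F_q^*\times\mathbb F_q$; (iii) if $T$ satisfies (d), then $T(x,y,Z)$ is a permutation polynomial in $Z$ over $\mathbb F_q$ for every $(x,y)\in\mathbb F_q\times\mathbb F_q$.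
   Context: A polynomial is reduced if its degree in each variable is less than $q$. A univariate polynomial $f\in\mathbb F_q[X]$ is a permutation polynomial over $\mathbb F_q$ if $x\mapsto f(x)$ is a bijection of $\mathbb F_q$. $\mathbb F_q^*$ denotes the nonzero elements of $\mathbb F_q$. *)

theory Defs
  imports "HOL-Computational_Algebra.Polynomial"
begin

text \<open>A trivariate polynomial over a finite field 'a = F_q is represented by its
coefficient function: T i j k is the coefficient of X^i Y^j Z^k.\<close>

type_synonym 'a tripoly = "nat \<Rightarrow> nat \<Rightarrow> nat \<Rightarrow> 'a"

definition reduced3 :: "('a::{finite,field}) tripoly \<Rightarrow> bool" where
  "reduced3 T \<longleftrightarrow> (\<forall>i j k. T i j k \<noteq> 0 \<longrightarrow>
      i < card (UNIV :: 'a set) \<and> j < card (UNIV :: 'a set) \<and> k < card (UNIV :: 'a set))"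

text \<open>Evaluation of a reduced polynomial (all coefficients live in indices below q).\<close>
definition eval3 :: "('a::{finite,field}) tripoly \<Rightarrow> 'a \<Rightarrow> 'a \<Rightarrow> 'a \<Rightarrow> 'a" where
  "eval3 T x y z = (\<Sum>i<card (UNIV :: 'a set). \<Sum>j<card (UNIV :: 'a set). \<Sum>k<card (UNIV :: 'a set).
      T i j k * x ^ i * y ^ j * z ^ k)"

definition polyX :: "('a::{finite,field}) tripoly \<Rightarrow> 'a \<Rightarrow> 'a \<Rightarrow> 'a poly" where
  "polyX T y z = (\<Sum>i<card (UNIV :: 'a set). monom (\<Sum>j<card (UNIV :: 'a set). \<Sum>k<card (UNIV :: 'a set). T i j k * y ^ j * z ^ k) i)"

definition polyY :: "('a::{finite,field}) tripoly \<Rightarrow> 'a \<Rightarrow> 'a \<Rightarrow> 'a poly" where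
  "polyY T x z = (\<Sum>j<card (UNIV :: 'a set). monom (\<Sum>i<card (UNIV :: 'a set). \<Sum>k<card (UNIV :: 'a set). T i j k * x ^ i * z ^ k) j)"

definition polyZ :: "('a::{finite,field}) tripoly \<Rightarrow> 'a \<Rightarrow> 'a \<Rightarrow> 'a poly" where
  "polyZ T x y = (\<Sum>k<card (UNIV :: 'a set). monom (\<Sum>i<card (UNIV :: 'a set). \<Sum>j<card (UNIV :: 'a set). T i j k * x ^ i * y ^ j) k)"

definition permutation_poly :: "('a::{finite,field}) poly \<Rightarrow> bool" where
  "permutation_poly f \<longleftrightarrow> bij (\<lambda>x. poly f x)"

end

theory Submission
  imports Defs
begin

text \<open>Since each univariate specialisation of T evaluates to T, being a permutation
polynomial means unique solvability of T = w in that variable. For Z this is (d). For X and Y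
the normalisation (a) rewrites w as T(x,0,w) resp. T(0,y,z), so (c) applied to the pairs
(y,z), (0,w) and (e) applied to the points 0, x give the unique solution.\<close>

lemma poly_polyX: "poly (polyX T y z) x = eval3 T x y z"
  unfolding polyX_def eval3_def
  by (simp add: poly_sum poly_monom sum_distrib_right sum_distrib_left mult_ac)

lemma poly_polyY: "poly (polyY T x z) y = eval3 T x y z"
proof -
  let ?n = "card (UNIV :: 'a set)"
  have "poly (polyY T x z) y = (\<Sum>j<?n. \<Sum>i<?n. \<Sum>k<?n. T i j k * x ^ i * y ^ j * z ^ k)"
    unfolding polyY_def by (simp add: poly_sum poly_monom sum_distrib_right sum_distrib_left mult_ac)
  also have "\<dots> = eval3 T x y z"
    unfolding eval3_def by (rule sum.swap)
  finally show ?thesis .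
qed

lemma poly_polyZ: "poly (polyZ T x y) z = eval3 T x y z"
proof -
  let ?n = "card (UNIV :: 'a set)"
  have "poly (polyZ T x y) z = (\<Sum>k<?n. \<Sum>i<?n. \<Sum>j<?n. T i j k * x ^ i * y ^ j * z ^ k)"
    unfolding polyZ_def by (simp add: poly_sum poly_monom sum_distrib_right sum_distrib_left mult_ac)
  also have "\<dots> = (\<Sum>i<?n. \<Sum>k<?n. \<Sum>j<?n. T i j k * x ^ i * y ^ j * z ^ k)"
    by (rule sum.swap)
  also have "\<dots> = eval3 T x y z"
    unfolding eval3_def by (intro sum.cong refl sum.swap)
  finally show ?thesis .
qed

lemma permutation_poly_iff_unique_preimage:
  "permutation_poly f \<longleftrightarrow> (\<forall>w. \<exists>!x. poly f x = w)"
  unfolding permutation_poly_def by (rule bij_iff)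

lemma permutation_polyX:
  assumes zero_left: "\<And>a z. eval3 T a 0 z = z"
    and unique_meet: "\<And>a b c d. a \<noteq> c \<Longrightarrow> \<exists>!x. eval3 T x a b = eval3 T x c d"
    and "y \<noteq> 0"
  shows "permutation_poly (polyX T y z)"
  unfolding permutation_poly_iff_unique_preimage poly_polyX
proof
  fix w
  from unique_meet[OF \<open>y \<noteq> 0\<close>, of z w]
  show "\<exists>!x. eval3 T x y z = w" by (simp add: zero_left)
qed

lemma permutation_polyY:
  assumes zero_right: "\<And>b z. eval3 T 0 b z = z"
    and unique_pair: "\<And>a b c d. a \<noteq> c \<Longrightarrow>
      \<exists>!p. eval3 T a (fst p) (snd p) = b \<and> eval3 T c (fst p) (snd p) = d"
    and "x \<noteq> 0"
  shows "permutation_poly (polyY T x z)"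
  unfolding permutation_poly_iff_unique_preimage poly_polyY
proof
  fix w
  have "0 \<noteq> x" using \<open>x \<noteq> 0\<close> by simp
  from unique_pair[OF this, of z w]
  obtain p where p: "eval3 T 0 (fst p) (snd p) = z \<and> eval3 T x (fst p) (snd p) = w"
    and p_unique: "\<And>p'. eval3 T 0 (fst p') (snd p') = z \<and> eval3 T x (fst p') (snd p') = w \<Longrightarrow> p' = p"
    by (elim ex1E) blast
  show "\<exists>!y. eval3 T x y z = w"
  proof (rule ex1I[of _ "fst p"])
    show "eval3 T x (fst p) z = w" using p zero_right by metis
  next
    fix y
    assume "eval3 T x y z = w"
    with p_unique[of "(y, z)"] show "y = fst p" by (auto simp: zero_right)
  qed
qed

lemma permutation_polyZ:
  assumes "\<And>a b c. \<exists>!z. eval3 T a b z = c"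
  shows "permutation_poly (polyZ T x y)"
  unfolding permutation_poly_iff_unique_preimage poly_polyZ using assms by blast

theorem theorem4p2:
  fixes T :: "('a::{finite,field}) tripoly"
  assumes "reduced3 T"
  shows
   "((\<forall>a b z. eval3 T a 0 z = z \<and> eval3 T 0 b z = z) \<and>
     (\<forall>a b c d. a \<noteq> c \<longrightarrow> (\<exists>!x. eval3 T x a b = eval3 T x c d))
     \<longrightarrow> (\<forall>y z. y \<noteq> 0 \<longrightarrow> permutation_poly (polyX T y z)))
  \<and> ((\<forall>a b z. eval3 T a 0 z = z \<and> eval3 T 0 b z = z) \<and>
     (\<forall>a b c d. a \<noteq> c \<longrightarrow> (\<exists>!p. eval3 T a (fst p) (snd p) = b \<and> eval3 T c (fst p) (snd p) = d))
     \<longrightarrow> (\<forall>x z. x \<noteq> 0 \<longrightarrow> permutation_poly (polyY T x z)))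
  \<and> ((\<forall>a b c. \<exists>!z. eval3 T a b z = c)
     \<longrightarrow> (\<forall>x y. permutation_poly (polyZ T x y)))"
proof (intro conjI impI allI)
  show "permutation_poly (polyX T y z)"
    if "(\<forall>a b z. eval3 T a 0 z = z \<and> eval3 T 0 b z = z) \<and>
      (\<forall>a b c d. a \<noteq> c \<longrightarrow> (\<exists>!x. eval3 T x a b = eval3 T x c d))" and "y \<noteq> 0"
    for y z
    using that by (intro permutation_polyX) blast+
  show "permutation_poly (polyY T x z)"
    if "(\<forall>a b z. eval3 T a 0 z = z \<and> eval3 T 0 b z = z) \<and>
      (\<forall>a b c d. a \<noteq> c \<longrightarrow>
        (\<exists>!p. eval3 T a (fst p) (snd p) = b \<and> eval3 T c (fst p) (snd p) = d))" and "x \<noteq> 0"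
    for x z
    using that by (intro permutation_polyY) blast+
  show "permutation_poly (polyZ T x y)" if "\<forall>a b c. \<exists>!z. eval3 T a b z = c" for x y
    using that by (intro permutation_polyZ) blast
qed

end
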